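(* Let $g:\mathbb{C}\to\mathbb{C}$ be holomorphic at $0$ with $g(0)=0$ and $g'(0)\neq 0$, let $\varphi:\mathbb{N}\to\mathbb{C}\setminus\{0\}$, and let $a$ be a real number. Let $(P_n(x))_{n\ge 0}$ be a sequence of Appell polynomials of type $(g,\varphi)$ with generating function $f$, i.e. $f$ is holomorphic at $0$, $f(0)\neq 0$, and $$\sum_{n\ge 0}P_n(x)\frac{t^n}{\varphi(0)\varphi(1)\cdots\varphi(n)}=f(t)e^{x g(t)}$$ for all $x\in\mathbb{C}$ and all $t$ near $0$. Put $h(t)=f(t)e^{\frac{a}{2}g(t)}$. Then $P_n(a-x)=(-1)^nP_n(x)$ for all $n\ge 0$ and all $x$ if and only if $g$ is an odd function and $h$ is an even function (near $0$).
   Context: Here $\mathbb{N}=\{0,1,2,\dots\}$. A sequence of polynomials $(P_n)_n$ is called a sequence of Appell polynomials of type $(g,\varphi)$ if there exists a function $f$ holomorphic at $0$ with $f(0)\neq0$ (its generating function) such that the displayed generating-function identity holds. *)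

theory Defs
  imports "HOL-Analysis.Analysis" "HOL-Computational_Algebra.Polynomial"
begin

definition appell_type ::
  "(complex \<Rightarrow> complex) \<Rightarrow> (nat \<Rightarrow> complex) \<Rightarrow> (nat \<Rightarrow> complex poly)
     \<Rightarrow> (complex \<Rightarrow> complex) \<Rightarrow> bool" where
  "appell_type g \<phi> P f \<longleftrightarrow>
     f analytic_on {0} \<and> f 0 \<noteq> 0 \<and>
     (\<forall>x. \<forall>\<^sub>F t in nhds 0.
        (\<lambda>n. poly (P n) x * t ^ n / (\<Prod>k\<le>n. \<phi> k)) sums (f t * exp (x * g t)))"

end

theory Submission
  imports Defs
begin

text \<open>Both sides of the reflection identity are coefficient sequences of power series in t:
  P_n(a - x) generates f(t) e^((a-x) g(t)) and (-1)^n P_n(x) generates f(-t) e^(x g(-t)).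
  So the reflection identity holds iff f(t) e^((a-x) g(t)) = f(-t) e^(x g(-t)) near 0 for all x.
  Taking x = a/2 makes this the evenness of h; comparing x = 0 with x = 1 gives
  e^(g(-t) + g(t)) = 1, which forces g(-t) = -g(t) near 0 by continuity of g.\<close>

lemma eventually_nhds_zero_reflect:
  fixes P :: "'a::real_normed_vector \<Rightarrow> bool"
  assumes "\<forall>\<^sub>F t in nhds 0. P t"
  shows "\<forall>\<^sub>F t in nhds 0. P (- t)"
proof -
  have "eventually P (filtermap uminus (nhds (0::'a)))"
    using assms by (simp add: filtermap_nhds_minus)
  then show ?thesis
    by (simp add: eventually_filtermap)
qed

lemma powser_sums_zero_imp_coeff_zero:
  fixes c :: "nat \<Rightarrow> 'a::{real_normed_field,banach}"
  assumes "\<forall>\<^sub>F t in nhds 0. (\<lambda>n. c n * t ^ n) sums 0"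
  shows "c m = 0"
proof -
  from assms obtain s where s: "s > 0"
    and sums_0: "\<And>t. dist t 0 < s \<Longrightarrow> (\<lambda>n. c n * t ^ n) sums 0"
    unfolding eventually_nhds_metric by blast
  show ?thesis
  proof (induction m rule: less_induct)
    case (less m)
    have "(\<lambda>n. c (n + m) * t ^ n) sums 0" if "t \<noteq> 0" "norm t < s" for t
    proof -
      have "(\<lambda>n. c (n + m) * t ^ (n + m)) sums (0 - (\<Sum>i<m. c i * t ^ i))"
        using sums_0[of t] that by (intro sums_split_initial_segment) (simp add: dist_norm)
      also have "(\<Sum>i<m. c i * t ^ i) = 0"
        using less by simp
      finally have "(\<lambda>n. t ^ m * (c (n + m) * t ^ n)) sums 0"
        by (simp add: power_add mult_ac)
      with \<open>t \<noteq> 0\<close> show ?thesis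
        using sums_mult_D by fastforce
    qed
    from powser_limit_0_strong[OF s this]
    have "((\<lambda>_. 0) \<longlongrightarrow> c m) (at (0::'a))"
      by simp
    then show ?case
      using LIM_const_eq by fastforce
  qed
qed

lemma eventually_zero_if_exp_eq_1:
  fixes u :: "'a \<Rightarrow> complex"
  assumes "(u \<longlongrightarrow> 0) F" and "\<forall>\<^sub>F t in F. exp (u t) = 1"
  shows "\<forall>\<^sub>F t in F. u t = 0"
proof -
  have "\<forall>\<^sub>F t in F. norm (u t) < 2 * pi"
    using tendstoD[OF assms(1), of "2 * pi"] by (simp add: dist_norm)
  with assms(2) show ?thesis
  proof eventually_elim
    case (elim t)
    then obtain n :: int where Re: "Re (u t) = 0" and Im: "Im (u t) = of_int (2 * n) * pi"
      using exp_eq_1 by blast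
    have "\<bar>Im (u t)\<bar> < 2 * pi"
      using elim(2) abs_Im_le_cmod le_less_trans by blast
    with Im have "n = 0"
      by (auto simp: abs_mult)
    with Re Im show ?case
      by (simp add: complex_eq_iff)
  qed
qed

lemma appell_reflection_iff_functional_equation:
  fixes b :: complex
  assumes "\<And>n. \<phi> n \<noteq> 0" and "appell_type g \<phi> P f"
  shows "(\<forall>n x. poly (P n) (b - x) = (-1) ^ n * poly (P n) x) \<longleftrightarrow>
         (\<forall>x. \<forall>\<^sub>F t in nhds 0. f t * exp ((b - x) * g t) = f (- t) * exp (x * g (- t)))"
proof -
  define C where "C n = (\<Prod>k\<le>n. \<phi> k)" for n
  have C_nonzero: "C n \<noteq> 0" for n
    using assms(1) unfolding C_def by simp
  have gf: "\<forall>\<^sub>F t in nhds 0. (\<lambda>n. poly (P n) x * t ^ n / C n) sums (f t * exp (x * g t))" for x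
    using assms(2) unfolding appell_type_def C_def by blast
  have gf_reflected: "\<forall>\<^sub>F t in nhds 0.
      (\<lambda>n. (-1) ^ n * poly (P n) x * t ^ n / C n) sums (f (- t) * exp (x * g (- t)))" for x
    using eventually_nhds_zero_reflect[OF gf[of x]] by (simp add: power_minus' mult_ac)
  show ?thesis
  proof
    assume reflection: "\<forall>n x. poly (P n) (b - x) = (-1) ^ n * poly (P n) x"
    show "\<forall>x. \<forall>\<^sub>F t in nhds 0. f t * exp ((b - x) * g t) = f (- t) * exp (x * g (- t))"
    proof
      fix x
      show "\<forall>\<^sub>F t in nhds 0. f t * exp ((b - x) * g t) = f (- t) * exp (x * g (- t))"
        using gf[of "b - x"] gf_reflected[of x]
        by eventually_elim (use reflection sums_unique2 in auto)
    qed
  next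
    assume functional_eq: "\<forall>x. \<forall>\<^sub>F t in nhds 0.
      f t * exp ((b - x) * g t) = f (- t) * exp (x * g (- t))"
    show "\<forall>n x. poly (P n) (b - x) = (-1) ^ n * poly (P n) x"
    proof (intro allI)
      fix n x
      have "\<forall>\<^sub>F t in nhds 0.
          (\<lambda>n. ((poly (P n) (b - x) - (-1) ^ n * poly (P n) x) / C n) * t ^ n) sums 0"
        using gf[of "b - x"] gf_reflected[of x] functional_eq[rule_format, of x]
      proof eventually_elim
        case (elim t)
        from sums_diff[OF elim(1,2)] elim(3) show ?case
          by (simp add: diff_divide_distrib left_diff_distrib)
      qed
      from powser_sums_zero_imp_coeff_zero[OF this, of n] C_nonzero[of n]
      show "poly (P n) (b - x) = (-1) ^ n * poly (P n) x"
        by simp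
    qed
  qed
qed

lemma odd_even_if_functional_equation:
  fixes f g :: "complex \<Rightarrow> complex" and b :: complex
  assumes "isCont g 0" and "g 0 = 0" and "isCont f 0" and "f 0 \<noteq> 0"
    and functional_eq: "\<And>x. \<forall>\<^sub>F t in nhds 0. f t * exp ((b - x) * g t) = f (- t) * exp (x * g (- t))"
  shows "(\<forall>\<^sub>F t in nhds 0. g (- t) = - g t) \<and>
         (\<forall>\<^sub>F t in nhds 0. f (- t) * exp (b / 2 * g (- t)) = f t * exp (b / 2 * g t))"
proof
  have g_tendsto: "(g \<longlongrightarrow> 0) (nhds 0)"
    using assms(1,2) tendsto_at_iff_tendsto_nhds[of g 0] unfolding isCont_def by simp
  have minus_tendsto: "((\<lambda>t. - t) \<longlongrightarrow> 0) (nhds (0::complex))"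
    by (simp add: filterlim_def filtermap_nhds_minus)
  have "((\<lambda>t. g (- t) + g t) \<longlongrightarrow> 0) (nhds 0)"
    using tendsto_add[OF filterlim_compose[OF g_tendsto minus_tendsto] g_tendsto] by simp
  moreover have "(f \<longlongrightarrow> f 0) (nhds 0)"
    using assms(3) tendsto_at_iff_tendsto_nhds[of f 0] unfolding isCont_def by simp
  then have "\<forall>\<^sub>F t in nhds 0. f t \<noteq> 0"
    using assms(4) by (rule tendsto_imp_eventually_ne)
  then have "\<forall>\<^sub>F t in nhds 0. exp (g (- t) + g t) = 1"
    using functional_eq[of 0] functional_eq[of 1]
  proof eventually_elim
    case (elim t)
    have "f t * exp (b * g t) * exp (- g t) = f t * exp ((b - 1) * g t)"
      by (simp add: exp_add[symmetric] algebra_simps)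
    also have "\<dots> = f t * exp (b * g t) * exp (g (- t))"
      using elim(2,3) by simp
    finally have "exp (g (- t)) = exp (- g t)"
      using elim(1) by simp
    then show ?case
      by (simp add: exp_add exp_minus)
  qed
  ultimately have "\<forall>\<^sub>F t in nhds 0. g (- t) + g t = 0"
    by (rule eventually_zero_if_exp_eq_1)
  then show "\<forall>\<^sub>F t in nhds 0. g (- t) = - g t"
    by (simp add: eq_neg_iff_add_eq_0)
  show "\<forall>\<^sub>F t in nhds 0. f (- t) * exp (b / 2 * g (- t)) = f t * exp (b / 2 * g t)"
    using functional_eq[of "b / 2"] by eventually_elim simp
qed

lemma functional_equation_if_odd_even:
  fixes f g :: "complex \<Rightarrow> complex" and b x :: complex
  assumes "\<forall>\<^sub>F t in nhds 0. g (- t) = - g t"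
    and "\<forall>\<^sub>F t in nhds 0. f (- t) * exp (b / 2 * g (- t)) = f t * exp (b / 2 * g t)"
  shows "\<forall>\<^sub>F t in nhds 0. f t * exp ((b - x) * g t) = f (- t) * exp (x * g (- t))"
  using assms
proof eventually_elim
  case (elim t)
  have "f (- t) = f t * exp (b / 2 * g t) * exp (b / 2 * g t)"
    using elim by (simp add: exp_minus field_simps)
  then show ?case
    using elim(1) by (simp add: exp_add[symmetric] algebra_simps)
qed

theorem mainTheorem1:
  fixes g f :: "complex \<Rightarrow> complex" and \<phi> :: "nat \<Rightarrow> complex"
    and P :: "nat \<Rightarrow> complex poly" and a :: real
  assumes "g analytic_on {0}" and "g 0 = 0" and "deriv g 0 \<noteq> 0"
    and "\<And>n. \<phi> n \<noteq> 0"
    and "appell_type g \<phi> P f"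
  shows "(\<forall>n x. poly (P n) (complex_of_real a - x) = (-1) ^ n * poly (P n) x) \<longleftrightarrow>
         ((\<forall>\<^sub>F t in nhds 0. g (- t) = - g t) \<and>
          (\<forall>\<^sub>F t in nhds 0. f (- t) * exp (complex_of_real a / 2 * g (- t))
                              = f t * exp (complex_of_real a / 2 * g t)))"
proof -
  \<comment> \<open>The hypothesis on deriv g 0 is not needed; analyticity is only used for continuity.\<close>
  have "isCont g 0" and "isCont f 0" and "f 0 \<noteq> 0"
    using assms(1,5) analytic_at_imp_isCont unfolding appell_type_def by auto
  then show ?thesis
    unfolding appell_reflection_iff_functional_equation[OF assms(4,5)]
    using odd_even_if_functional_equation[OF \<open>isCont g 0\<close> assms(2)]
      functional_equation_if_odd_even
    by blast
qed

end
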